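(* Let $a$ be the MMF allocation computed with entitlements $e$ and reported demands $\bar d_1,\dots,\bar d_n$, where $\bar d_i\ge d_i^*$ for all $i$, and let $\underline d_i\le d_i^*$ for all $i$. Then $\ell(d^*,a)\le\sum_{i=1}^n(\bar d_i-d_i^* )\le\sum_{i=1}^n(\bar d_i-\underline d_i)$.
   Context: A divisible resource of size $1$ is shared by $n$ agents with entitlements $e_i>0$, $\sum_ie_i=1$, and true demands $d_i^*\ge0$. MMF$(e,d)$ on reported demands $d_1,\dots,d_n\ge0$: set $r=1$, $E=1$, $S=\{1,\dots,n\}$, $a=0$; process agents $j$ in ascending order of $d_j/e_j$; if $d_j<re_j/E$, set $a_j=d_j$, remove $j$ from $S$, $r\leftarrow r-d_j$, $E\leftarrow E-e_j$ and continue; otherwise set $a_k=re_k/E$ for all $k\in S$ and stop; output $a$. For $d,a\in\mathbb{R}_+^n$: $\ell_{ur}(a)=1-\sum_ia_i$, $\ell_{or}(d,a)=\sum_i(a_i-d_i)^+$, $\ell_{ud}(d,a)=\sum_i(d_i-a_i)^+$, $\ell(d,a)=\min(\ell_{ur}(a)+\ell_{or}(d,a),\ell_{ud}(d,a))$. *)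

theory Defs
  imports Complex_Main
begin

text \<open>Agents are indexed by 0..n-1. The MMF loop processes the remaining agents
  (a list, already sorted by d_j/e_j); r is the remaining resource, E the remaining
  entitlement; the remaining set S is exactly the set of the list.\<close>

fun mmf_loop :: "(nat \<Rightarrow> real) \<Rightarrow> (nat \<Rightarrow> real) \<Rightarrow> real \<Rightarrow> real \<Rightarrow> nat list \<Rightarrow> (nat \<Rightarrow> real)" where
  "mmf_loop e d r E [] = (\<lambda>k. 0)"
| "mmf_loop e d r E (j # js) =
     (if d j < r * e j / E
      then (mmf_loop e d (r - d j) (E - e j) js)(j := d j)
      else (\<lambda>k. if k \<in> set (j # js) then r * e k / E else 0))"

definition MMF :: "nat \<Rightarrow> (nat \<Rightarrow> real) \<Rightarrow> (nat \<Rightarrow> real) \<Rightarrow> (nat \<Rightarrow> real)" where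
  "MMF n e d = mmf_loop e d 1 1 (sort_key (\<lambda>j. d j / e j) [0..<n])"

definition loss_ur :: "nat \<Rightarrow> (nat \<Rightarrow> real) \<Rightarrow> real" where
  "loss_ur n a = 1 - (\<Sum>i<n. a i)"

definition loss_or :: "nat \<Rightarrow> (nat \<Rightarrow> real) \<Rightarrow> (nat \<Rightarrow> real) \<Rightarrow> real" where
  "loss_or n d a = (\<Sum>i<n. max (a i - d i) 0)"

definition loss_ud :: "nat \<Rightarrow> (nat \<Rightarrow> real) \<Rightarrow> (nat \<Rightarrow> real) \<Rightarrow> real" where
  "loss_ud n d a = (\<Sum>i<n. max (d i - a i) 0)"

definition loss :: "nat \<Rightarrow> (nat \<Rightarrow> real) \<Rightarrow> (nat \<Rightarrow> real) \<Rightarrow> real" where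
  "loss n d a = min (loss_ur n a + loss_or n d a) (loss_ud n d a)"

end

theory Submission
  imports Defs
begin

text \<open>MMF never gives an agent more than its reported demand, and either it grants every
  reported demand or it hands out the whole resource. In the first case no true demand
  is left unserved (reports over-state true demands), so \<open>\<ell>\<^sub>u\<^sub>d = 0\<close>. In the second case
  \<open>\<ell>\<^sub>u\<^sub>r = 0\<close>, and the excess \<open>(a\<^sub>i - d\<^sub>i\<^sup>*)\<^sup>+\<close> of each agent is at most \<open>d\<^sub>i - d\<^sub>i\<^sup>*\<close>
  for its report \<open>d\<^sub>i\<close>.\<close>

lemma mmf_loop_capped_and_saturating:
  assumes "distinct js" "\<And>k. k \<in> set js \<Longrightarrow> e k > 0"
    and "E = (\<Sum>k\<in>set js. e k)" "sorted (map (\<lambda>j. d j / e j) js)"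
  shows "(\<forall>k\<in>set js. mmf_loop e d r E js k \<le> d k) \<and>
         ((\<forall>k\<in>set js. mmf_loop e d r E js k = d k) \<or> (\<Sum>k\<in>set js. mmf_loop e d r E js k) = r)"
  using assms
proof (induction js arbitrary: r E)
  case Nil
  then show ?case by simp
next
  case (Cons j js)
  have j_fresh: "j \<notin> set js" using Cons.prems by simp
  show ?case
  proof (cases "d j < r * e j / E")
    case True
    let ?a = "mmf_loop e d (r - d j) (E - e j) js"
    have IH: "(\<forall>k\<in>set js. ?a k \<le> d k) \<and>
         ((\<forall>k\<in>set js. ?a k = d k) \<or> (\<Sum>k\<in>set js. ?a k) = r - d j)"
      by (rule Cons.IH) (use Cons.prems j_fresh in auto)
    have "(\<Sum>k\<in>set js. (?a(j := d j)) k) = (\<Sum>k\<in>set js. ?a k)"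
      by (rule sum.cong) (use j_fresh in auto)
    with True IH j_fresh show ?thesis by auto
  next
    case False
    have "(\<Sum>k\<in>set (j # js). e k) > 0"
      by (rule sum_pos) (use Cons.prems in auto)
    then have E_pos: "E > 0" using Cons.prems by simp
    have "r / E \<le> d j / e j"
      using False Cons.prems by (simp add: field_simps)
    \<comment> \<open>\<open>j\<close> has the least ratio \<open>d/e\<close>, so the common level \<open>r/E\<close> stays below every demand\<close>
    have capped: "r * e k / E \<le> d k" if k: "k \<in> set (j # js)" for k
    proof -
      have "d j / e j \<le> d k / e k"
        using k Cons.prems(4) by auto
      with \<open>r / E \<le> d j / e j\<close> have "r / E \<le> d k / e k" by linarith
      then show ?thesis using Cons.prems(2)[OF k] E_pos by (simp add: field_simps)
    qed
    have "(\<Sum>k\<in>set (j # js). r * e k / E) = r / E * (\<Sum>k\<in>set (j # js). e k)"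
      by (simp add: sum_distrib_left)
    also have "\<dots> = r" using E_pos Cons.prems(3) by simp
    finally have "(\<Sum>k\<in>set (j # js). r * e k / E) = r" .
    with False capped show ?thesis
      by (simp del: list.set)
  qed
qed

lemma MMF_capped_and_saturating:
  assumes "\<And>i. i < n \<Longrightarrow> e i > 0" and "(\<Sum>i<n. e i) = 1"
  shows "(\<forall>k<n. MMF n e d k \<le> d k) \<and>
         ((\<forall>k<n. MMF n e d k = d k) \<or> (\<Sum>k<n. MMF n e d k) = 1)"
proof -
  have set_sorted: "set (sort_key (\<lambda>j. d j / e j) [0..<n]) = {..<n}" by auto
  show ?thesis
    using mmf_loop_capped_and_saturating[of "sort_key (\<lambda>j. d j / e j) [0..<n]" e 1 d 1]
    unfolding MMF_def set_sorted
    using assms by (auto simp: sorted_sort_key atLeast0LessThan)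
qed

lemma loss_ud_eq_0_if_demands_covered:
  assumes "\<And>i. i < n \<Longrightarrow> d i \<le> a i"
  shows "loss_ud n d a = 0"
  unfolding loss_ud_def using assms by (auto intro!: sum.neutral)

lemma loss_or_le_overreport:
  assumes "\<And>i. i < n \<Longrightarrow> a i \<le> dbar i" and "\<And>i. i < n \<Longrightarrow> d i \<le> dbar i"
  shows "loss_or n d a \<le> (\<Sum>i<n. dbar i - d i)"
  unfolding loss_or_def by (rule sum_mono) (use assms in auto)

lemma loss_le_overreport:
  assumes "\<And>i. i < n \<Longrightarrow> d i \<le> dbar i"
    and "\<And>i. i < n \<Longrightarrow> a i \<le> dbar i"
    and "(\<forall>i<n. a i = dbar i) \<or> (\<Sum>i<n. a i) = 1"
  shows "loss n d a \<le> (\<Sum>i<n. dbar i - d i)"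
proof (cases "\<forall>i<n. a i = dbar i")
  case True
  then have "loss_ud n d a = 0"
    using assms(1) by (intro loss_ud_eq_0_if_demands_covered) auto
  moreover have "0 \<le> (\<Sum>i<n. dbar i - d i)"
    by (rule sum_nonneg) (use assms(1) in auto)
  ultimately show ?thesis unfolding loss_def by simp
next
  case False
  then have "loss_ur n a = 0"
    using assms(3) unfolding loss_ur_def by auto
  moreover have "loss_or n d a \<le> (\<Sum>i<n. dbar i - d i)"
    using assms(1,2) by (intro loss_or_le_overreport)
  ultimately show ?thesis unfolding loss_def by simp
qed

theorem lemma1:
  fixes n :: nat and e dstar dbar dlow :: "nat \<Rightarrow> real"
  assumes "\<And>i. i < n \<Longrightarrow> e i > 0"
    and "(\<Sum>i<n. e i) = 1"
    and "\<And>i. i < n \<Longrightarrow> dstar i \<ge> 0"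
    and "\<And>i. i < n \<Longrightarrow> dbar i \<ge> dstar i"
    and "\<And>i. i < n \<Longrightarrow> dlow i \<le> dstar i"
  shows "loss n dstar (MMF n e dbar) \<le> (\<Sum>i<n. dbar i - dstar i)
       \<and> (\<Sum>i<n. dbar i - dstar i) \<le> (\<Sum>i<n. dbar i - dlow i)"
proof
  show "loss n dstar (MMF n e dbar) \<le> (\<Sum>i<n. dbar i - dstar i)"
    using loss_le_overreport MMF_capped_and_saturating[OF assms(1,2)] assms(4) by blast
  show "(\<Sum>i<n. dbar i - dstar i) \<le> (\<Sum>i<n. dbar i - dlow i)"
    by (rule sum_mono) (use assms(5) in auto)
qed

end
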